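(* There is an absolute constant $c>0$ such that the following holds. Let $n,d,k\ge1$, let $\phi:\mathbb{R}\to\mathbb{R}$ be $L$-Lipschitz with $\phi(0)=0$, let $b>0$, and let $x_1,\dots,x_n,x'_1,\dots,x'_n\in\mathbb{R}^d$ satisfy $\|x_i\|_2,\|x'_i\|_2\le b$. For $a,a'>0$ let $\mathcal{J}^k_{a,a'}=\{A\in\mathbb{R}^{d\times k}:\|A\|_{2,1}\le a,\ \|A\|_{op}\le a'\}$. Then for every $\varepsilon>0$, $$\log\mathcal{N}\big(\mathcal{F}_k(\mathcal{J}^k_{a,a'}),\varepsilon\big)\le c\,\frac{a^2a'^2b^4nL^4}{k^2\varepsilon^2}\log(2dk).$$
   Context: For $A\in\mathbb{R}^{d\times k}$ with columns $A_{\cdot 1},\dots,A_{\cdot k}$: $\|A\|_{2,1}=\sum_{j=1}^k\|A_{\cdot j}\|_2$ and $\|A\|_{op}$ is the spectral norm. For $u,v\in\mathbb{R}^k$, $\zeta_k(u,v)=\frac1k\|u-v\|_2^2$. The function $\phi$ is applied coordinatewise to vectors. Given fixed points $x_1,\dots,x_n,x'_1,\dots,x'_n\in\mathbb{R}^d$ and a set $\mathcal{G}\subset\mathbb{R}^{d\times k}$, define $\mathcal{F}_k(\mathcal{G})=\{(\zeta_k(\phi(A^tx_i),\phi(A^tx'_i)))_{i=1}^n : A\in\mathcal{G}\}\subset\mathbb{R}^n$. For $\mathcal{A}\subset\mathbb{R}^n$, the covering number $\mathcal{N}(\mathcal{A},\varepsilon)$ is the minimal size of a set $\mathcal{B}\subset\mathcal{A}$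 such that every $x\in\mathcal{A}$ has some $y\in\mathcal{B}$ with $\|x-y\|_2\le\varepsilon$. *)

theory Defs
  imports "HOL-Analysis.Analysis"
begin

text \<open>Conventions. Vectors in R^m are functions nat => real, only the
coordinates 0..<m matter. A d x k matrix is a function nat => nat => real,
entry A i j with i < d (row), j < k (column).\<close>

definition vnorm :: "nat \<Rightarrow> (nat \<Rightarrow> real) \<Rightarrow> real" where
  "vnorm m v = sqrt (\<Sum>i<m. (v i)\<^sup>2)"

definition norm21 :: "nat \<Rightarrow> nat \<Rightarrow> (nat \<Rightarrow> nat \<Rightarrow> real) \<Rightarrow> real" where
  "norm21 d k A = (\<Sum>j<k. vnorm d (\<lambda>i. A i j))"

definition matvec :: "nat \<Rightarrow> (nat \<Rightarrow> nat \<Rightarrow> real) \<Rightarrow> (nat \<Rightarrow> real) \<Rightarrow> (nat \<Rightarrow> real)" where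
  "matvec k A v = (\<lambda>i. \<Sum>j<k. A i j * v j)"

definition tmatvec :: "nat \<Rightarrow> (nat \<Rightarrow> nat \<Rightarrow> real) \<Rightarrow> (nat \<Rightarrow> real) \<Rightarrow> (nat \<Rightarrow> real)" where
  "tmatvec d A x = (\<lambda>j. \<Sum>i<d. A i j * x i)"

definition opnorm :: "nat \<Rightarrow> nat \<Rightarrow> (nat \<Rightarrow> nat \<Rightarrow> real) \<Rightarrow> real" where
  "opnorm d k A = Sup {vnorm d (matvec k A v) | v. vnorm k v \<le> 1}"

definition zeta :: "nat \<Rightarrow> (nat \<Rightarrow> real) \<Rightarrow> (nat \<Rightarrow> real) \<Rightarrow> real" where
  "zeta k u v = (1 / real k) * (vnorm k (\<lambda>j. u j - v j))\<^sup>2"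

definition J_set :: "nat \<Rightarrow> nat \<Rightarrow> real \<Rightarrow> real \<Rightarrow> (nat \<Rightarrow> nat \<Rightarrow> real) set" where
  "J_set d k a a' = {A. norm21 d k A \<le> a \<and> opnorm d k A \<le> a'}"

text \<open>F_k(G) as a subset of R^n; vectors are canonicalised to be 0 outside 0..<n.\<close>
definition F_set :: "nat \<Rightarrow> nat \<Rightarrow> nat \<Rightarrow> (real \<Rightarrow> real) \<Rightarrow> (nat \<Rightarrow> nat \<Rightarrow> real)
     \<Rightarrow> (nat \<Rightarrow> nat \<Rightarrow> real) \<Rightarrow> (nat \<Rightarrow> nat \<Rightarrow> real) set \<Rightarrow> (nat \<Rightarrow> real) set" where
  "F_set n d k \<phi> x x' G =
     (\<lambda>A. (\<lambda>i. if i < n then zeta k (\<phi> \<circ> tmatvec d A (x i)) (\<phi> \<circ> tmatvec d A (x' i)) else 0)) ` G"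

definition covering_number :: "nat \<Rightarrow> (nat \<Rightarrow> real) set \<Rightarrow> real \<Rightarrow> nat" where
  "covering_number n S \<epsilon> =
     Inf {card B | B. finite B \<and> B \<subseteq> S \<and> (\<forall>u\<in>S. \<exists>w\<in>B. vnorm n (\<lambda>i. u i - w i) \<le> \<epsilon>)}"

end

theory Submission
  imports Defs
begin

text \<open>Each coordinate of a vector in \<open>F_k\<close> is Lipschitz in the features \<open>A\<^sup>t x\<^sub>i\<close>,
  \<open>A\<^sup>t x'\<^sub>i\<close> once the values are clipped at their a-priori maximum \<open>(2 L a' b)\<^sup>2 / k\<close>.
  Since \<open>\<bar>A\<bar>\<^sub>2\<^sub>,\<^sub>1 \<le> a\<close>, the feature map of \<open>A\<close> is a convex combination of
  the feature maps of \<open>2 d k + 1\<close> fixed atoms (signed, rescaled matrix units), each of energy at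
  most \<open>2 n a\<^sup>2 b\<^sup>2\<close>. Maurey's empirical method then approximates it by the mean of
  \<open>m\<close> atoms within squared distance \<open>2 n a\<^sup>2 b\<^sup>2 / m\<close>, and the \<open>(2 d k + 1)\<^sup>m\<close>
  clipped images of these means form an \<open>\<epsilon>\<close>-net as soon as
  \<open>m \<ge> 576 a\<^sup>2 a'\<^sup>2 b\<^sup>4 n L\<^sup>4 / (k\<^sup>2 \<epsilon>\<^sup>2)\<close>.\<close>

section \<open>Euclidean and operator norms\<close>

lemma vnorm_eq_L2_set: "vnorm m v = L2_set v {..<m}"
  by (simp add: vnorm_def L2_set_def)

lemma vnorm_nonneg [simp]: "0 \<le> vnorm m v"
  by (simp add: vnorm_eq_L2_set)

lemma vnorm_power2: "(vnorm m v)\<^sup>2 = (\<Sum>i<m. (v i)\<^sup>2)"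
  unfolding vnorm_def by (simp add: sum_nonneg)

lemma vnorm_add_le: "vnorm m (\<lambda>i. u i + v i) \<le> vnorm m u + vnorm m v"
  unfolding vnorm_eq_L2_set by (rule L2_set_triangle_ineq)

lemma vnorm_uminus: "vnorm m (\<lambda>i. - v i) = vnorm m v"
  by (simp add: vnorm_def)

lemma vnorm_diff_le: "vnorm m (\<lambda>i. u i - v i) \<le> vnorm m u + vnorm m v"
  using vnorm_add_le[of m u "\<lambda>i. - v i"] by (simp add: vnorm_uminus)

lemma vnorm_diff_commute: "vnorm m (\<lambda>i. u i - v i) = vnorm m (\<lambda>i. v i - u i)"
  unfolding vnorm_def by (simp add: power2_commute)

lemma vnorm_diff_triangle:
  "vnorm m (\<lambda>i. u i - w i) \<le> vnorm m (\<lambda>i. u i - v i) + vnorm m (\<lambda>i. v i - w i)"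
  using vnorm_add_le[of m "\<lambda>i. u i - v i" "\<lambda>i. v i - w i"] by simp

lemma abs_vnorm_diff_le: "\<bar>vnorm m u - vnorm m v\<bar> \<le> vnorm m (\<lambda>i. u i - v i)"
  using vnorm_add_le[of m "\<lambda>i. u i - v i" v] vnorm_add_le[of m "\<lambda>i. v i - u i" u]
  by (simp add: vnorm_diff_commute[of m u v])

lemma vnorm_mult: "vnorm m (\<lambda>i. c * v i) = \<bar>c\<bar> * vnorm m v"
  unfolding vnorm_def
  by (simp add: power_mult_distrib real_sqrt_mult sum_nonneg flip: sum_distrib_left)

lemma vnorm_zero [simp]: "vnorm m (\<lambda>_. 0) = 0"
  by (simp add: vnorm_def)

lemma vnorm_eq_0_iff: "vnorm m v = 0 \<longleftrightarrow> (\<forall>i<m. v i = 0)"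
  by (auto simp: vnorm_eq_L2_set L2_set_eq_0_iff)

lemma abs_inner_le_vnorm: "\<bar>\<Sum>i<m. u i * v i\<bar> \<le> vnorm m u * vnorm m v"
proof -
  have "\<bar>\<Sum>i<m. u i * v i\<bar> \<le> (\<Sum>i<m. \<bar>u i\<bar> * \<bar>v i\<bar>)"
    using sum_abs[of "\<lambda>i. u i * v i"] by (simp add: abs_mult)
  also have "\<dots> \<le> vnorm m u * vnorm m v"
    unfolding vnorm_eq_L2_set by (rule L2_set_mult_ineq)
  finally show ?thesis .
qed

lemma vnorm_comp_lipschitz:
  assumes "L-lipschitz_on UNIV \<phi>"
  shows "vnorm m (\<lambda>j. \<phi> (u j) - \<phi> (v j)) \<le> L * vnorm m (\<lambda>j. u j - v j)"
proof -
  have "0 \<le> L" using assms by (rule lipschitz_on_nonneg)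
  have "vnorm m (\<lambda>j. \<phi> (u j) - \<phi> (v j)) = L2_set (\<lambda>j. \<bar>\<phi> (u j) - \<phi> (v j)\<bar>) {..<m}"
    unfolding vnorm_eq_L2_set L2_set_def by simp
  also have "\<dots> \<le> L2_set (\<lambda>j. L * \<bar>u j - v j\<bar>) {..<m}"
    using assms by (intro L2_set_mono) (auto simp: lipschitz_on_def dist_real_def)
  also have "\<dots> = L * L2_set (\<lambda>j. \<bar>u j - v j\<bar>) {..<m}"
    using \<open>0 \<le> L\<close> by (rule L2_set_right_distrib[symmetric])
  also have "\<dots> = L * vnorm m (\<lambda>j. u j - v j)"
    unfolding vnorm_eq_L2_set L2_set_def by simp
  finally show ?thesis .
qed

lemma matvec_vnorm_le_opnorm:
  assumes "vnorm k v \<le> 1"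
  shows "vnorm d (matvec k A v) \<le> opnorm d k A"
  unfolding opnorm_def
proof (rule cSup_upper)
  show "vnorm d (matvec k A v) \<in> {vnorm d (matvec k A v) |v. vnorm k v \<le> 1}"
    using assms by blast
  have "vnorm d (matvec k A w) \<le> vnorm d (\<lambda>i. vnorm k (A i))" if "vnorm k w \<le> 1" for w
  proof -
    have "vnorm d (matvec k A w) = L2_set (\<lambda>i. \<bar>matvec k A w i\<bar>) {..<d}"
      unfolding vnorm_eq_L2_set L2_set_def by simp
    also have "\<dots> \<le> L2_set (\<lambda>i. vnorm k (A i)) {..<d}"
    proof (rule L2_set_mono)
      fix i
      have "\<bar>matvec k A w i\<bar> \<le> vnorm k (A i) * vnorm k w"
        unfolding matvec_def by (rule abs_inner_le_vnorm)
      also have "\<dots> \<le> vnorm k (A i)"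
        using that by (simp add: mult_left_le)
      finally show "\<bar>matvec k A w i\<bar> \<le> vnorm k (A i)" .
    qed simp
    finally show ?thesis by (simp add: vnorm_eq_L2_set)
  qed
  then show "bdd_above {vnorm d (matvec k A v) |v. vnorm k v \<le> 1}"
    unfolding bdd_above_def by blast
qed

lemma opnorm_nonneg: "0 \<le> opnorm d k A"
  using matvec_vnorm_le_opnorm[of k "\<lambda>_. 0" d A] by (simp add: vnorm_def matvec_def)

lemma matvec_vnorm_le: "vnorm d (matvec k A v) \<le> opnorm d k A * vnorm k v"
proof (cases "vnorm k v = 0")
  case True
  then have "matvec k A v = (\<lambda>_. 0)"
    by (auto simp: vnorm_eq_0_iff matvec_def)
  with True show ?thesis by simp
next
  case False
  define N where "N = vnorm k v"
  have "N > 0" using False by (simp add: N_def order_le_neq_trans)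
  have "matvec k A v = (\<lambda>i. N * matvec k A (\<lambda>j. v j / N) i)"
    using \<open>N > 0\<close> by (auto simp: matvec_def sum_distrib_left)
  then have "vnorm d (matvec k A v) = N * vnorm d (matvec k A (\<lambda>j. v j / N))"
    using \<open>N > 0\<close> by (simp add: vnorm_mult)
  also have "vnorm d (matvec k A (\<lambda>j. v j / N)) \<le> opnorm d k A"
    using \<open>N > 0\<close> vnorm_mult[of k "1 / N" v]
    by (intro matvec_vnorm_le_opnorm) (simp add: N_def)
  finally show ?thesis
    using \<open>N > 0\<close> by (simp add: N_def mult.commute)
qed

lemma tmatvec_vnorm_le: "vnorm k (tmatvec d A y) \<le> opnorm d k A * vnorm d y"
proof -
  define N where "N = vnorm k (tmatvec d A y)"
  have "N\<^sup>2 = (\<Sum>i<d. y i * matvec k A (tmatvec d A y) i)"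
    unfolding N_def vnorm_power2 matvec_def tmatvec_def
    by (simp add: power2_eq_square sum_distrib_left sum_distrib_right mult_ac sum.swap[of _ "{..<k}"])
  also have "\<dots> \<le> vnorm d y * vnorm d (matvec k A (tmatvec d A y))"
    using abs_inner_le_vnorm[where m=d and u=y and v="matvec k A (tmatvec d A y)"] by linarith
  also have "\<dots> \<le> vnorm d y * (opnorm d k A * N)"
    unfolding N_def by (intro mult_left_mono matvec_vnorm_le) simp
  finally have "N * N \<le> N * (opnorm d k A * vnorm d y)"
    by (simp add: power2_eq_square mult_ac)
  moreover have "0 \<le> N" "0 \<le> opnorm d k A * vnorm d y"
    by (simp_all add: N_def opnorm_nonneg)
  ultimately show ?thesis
    unfolding N_def[symmetric] by (cases "N = 0") (auto simp: mult_le_cancel_left_pos)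
qed

lemma abs_power2_diff_min_le:
  fixes p q W e :: real
  assumes "0 \<le> p" "p \<le> W" "0 \<le> q" "\<bar>p - q\<bar> \<le> e"
  shows "\<bar>p\<^sup>2 - min (W\<^sup>2) (q\<^sup>2)\<bar> \<le> 3 * W * e"
proof -
  have "0 \<le> W" "0 \<le> e" "p\<^sup>2 \<le> W\<^sup>2"
    using assms by (auto intro: power_mono)
  show ?thesis
  proof (cases "e \<le> W")
    case True
    have "\<bar>p\<^sup>2 - min (W\<^sup>2) (q\<^sup>2)\<bar> \<le> \<bar>p\<^sup>2 - q\<^sup>2\<bar>"
      using \<open>p\<^sup>2 \<le> W\<^sup>2\<close> by (auto simp: min_def)
    also have "\<dots> = \<bar>p - q\<bar> * (p + q)"
      using assms(1,3) by (simp add: power2_eq_square square_diff_square_factored abs_mult)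
    also have "\<dots> \<le> e * (2 * W + e)"
      using assms by (intro mult_mono) auto
    also have "\<dots> \<le> 3 * W * e"
      using True \<open>0 \<le> e\<close> mult_right_mono[of e W e] by (simp add: algebra_simps)
    finally show ?thesis .
  next
    case False
    have "\<bar>p\<^sup>2 - min (W\<^sup>2) (q\<^sup>2)\<bar> \<le> W\<^sup>2"
      using \<open>p\<^sup>2 \<le> W\<^sup>2\<close> zero_le_power2[of p] zero_le_power2[of q]
      unfolding min_def by (smt (verit))
    also have "\<dots> \<le> W * e"
      using False \<open>0 \<le> W\<close> by (simp add: power2_eq_square mult_left_mono)
    also have "\<dots> \<le> 3 * W * e"
      using \<open>0 \<le> W\<close> \<open>0 \<le> e\<close> by simp
    finally show ?thesis .
  qed
qed

lemma zeta_comp_clipped_close: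
  assumes lip: "L-lipschitz_on UNIV \<phi>" and "k > 0" and R: "vnorm k (\<lambda>j. u j - u' j) \<le> R"
  shows "\<bar>zeta k (\<phi> \<circ> u) (\<phi> \<circ> u') - min ((L * R)\<^sup>2 / k) (zeta k (\<phi> \<circ> v) (\<phi> \<circ> v'))\<bar>
    \<le> 3 * (L * R) * (L * (vnorm k (\<lambda>j. u j - v j) + vnorm k (\<lambda>j. u' j - v' j))) / k"
proof -
  define p where "p = vnorm k (\<lambda>j. \<phi> (u j) - \<phi> (u' j))"
  define q where "q = vnorm k (\<lambda>j. \<phi> (v j) - \<phi> (v' j))"
  define e where "e = L * (vnorm k (\<lambda>j. u j - v j) + vnorm k (\<lambda>j. u' j - v' j))"
  have "0 \<le> L" using lip by (rule lipschitz_on_nonneg)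
  have "p \<le> L * vnorm k (\<lambda>j. u j - u' j)"
    unfolding p_def by (rule vnorm_comp_lipschitz[OF lip])
  also have "\<dots> \<le> L * R"
    using R \<open>0 \<le> L\<close> by (rule mult_left_mono)
  finally have "p \<le> L * R" .
  have "\<bar>p - q\<bar> \<le> vnorm k (\<lambda>j. (\<phi> (u j) - \<phi> (u' j)) - (\<phi> (v j) - \<phi> (v' j)))"
    unfolding p_def q_def by (rule abs_vnorm_diff_le)
  also have "\<dots> = vnorm k (\<lambda>j. (\<phi> (u j) - \<phi> (v j)) - (\<phi> (u' j) - \<phi> (v' j)))"
    by (intro arg_cong[where f = "vnorm k"] ext) (simp add: algebra_simps)
  also have "\<dots> \<le> vnorm k (\<lambda>j. \<phi> (u j) - \<phi> (v j)) + vnorm k (\<lambda>j. \<phi> (u' j) - \<phi> (v' j))"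
    by (rule vnorm_diff_le)
  also have "\<dots> \<le> e"
    unfolding e_def distrib_left by (intro add_mono vnorm_comp_lipschitz[OF lip])
  finally have "\<bar>p\<^sup>2 - min ((L * R)\<^sup>2) (q\<^sup>2)\<bar> \<le> 3 * (L * R) * e"
    using \<open>p \<le> L * R\<close> by (intro abs_power2_diff_min_le) (simp_all add: p_def q_def)
  have "min ((L * R)\<^sup>2 / k) (q\<^sup>2 / k) = min ((L * R)\<^sup>2) (q\<^sup>2) / k"
    by (simp add: min_divide_distrib_right)
  then have "\<bar>zeta k (\<phi> \<circ> u) (\<phi> \<circ> u') - min ((L * R)\<^sup>2 / k) (zeta k (\<phi> \<circ> v) (\<phi> \<circ> v'))\<bar>
      = \<bar>(p\<^sup>2 - min ((L * R)\<^sup>2) (q\<^sup>2)) / k\<bar>"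
    by (simp add: zeta_def p_def q_def diff_divide_distrib)
  also have "\<dots> = \<bar>p\<^sup>2 - min ((L * R)\<^sup>2) (q\<^sup>2)\<bar> / k"
    by (simp add: abs_divide)
  also have "\<dots> \<le> 3 * (L * R) * e / k"
    by (rule divide_right_mono[OF \<open>\<bar>p\<^sup>2 - min ((L * R)\<^sup>2) (q\<^sup>2)\<bar> \<le> 3 * (L * R) * e\<close>]) simp
  finally show ?thesis
    unfolding e_def .
qed

section \<open>Maurey's empirical method\<close>

lemma finite_nonempty_if_sum_eq_1:
  assumes "sum p K = (1 :: real)"
  shows "finite K" "K \<noteq> {}"
  using assms by (auto intro: ccontr simp: sum.infinite)

lemma convex_combination_le:
  fixes p F :: "'k \<Rightarrow> real"
  assumes "\<forall>\<kappa>\<in>K. 0 \<le> p \<kappa>" "sum p K = 1" "\<forall>\<kappa>\<in>K. F \<kappa> \<le> R"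
  shows "(\<Sum>\<kappa>\<in>K. p \<kappa> * F \<kappa>) \<le> R"
proof -
  have "(\<Sum>\<kappa>\<in>K. p \<kappa> * F \<kappa>) \<le> (\<Sum>\<kappa>\<in>K. p \<kappa> * R)"
    using assms(1,3) by (intro sum_mono mult_left_mono) auto
  also have "\<dots> = R"
    using assms(2) by (simp flip: sum_distrib_right)
  finally show ?thesis .
qed

lemma ex_le_convex_combination:
  fixes p F :: "'k \<Rightarrow> real"
  assumes "\<forall>\<kappa>\<in>K. 0 \<le> p \<kappa>" "sum p K = 1"
  shows "\<exists>\<kappa>\<in>K. F \<kappa> \<le> (\<Sum>\<kappa>\<in>K. p \<kappa> * F \<kappa>)"
proof -
  note K = finite_nonempty_if_sum_eq_1[OF assms(2)]
  have "Min (F ` K) \<in> F ` K"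
    using K by simp
  then obtain \<kappa> where "\<kappa> \<in> K" "F \<kappa> = Min (F ` K)"
    by auto
  have "F \<kappa> = (\<Sum>\<kappa>'\<in>K. p \<kappa>' * F \<kappa>)"
    using assms(2) by (simp flip: sum_distrib_right)
  also have "\<dots> \<le> (\<Sum>\<kappa>'\<in>K. p \<kappa>' * F \<kappa>')"
    using assms(1) K \<open>F \<kappa> = Min (F ` K)\<close> by (intro sum_mono mult_left_mono) auto
  finally show ?thesis
    using \<open>\<kappa> \<in> K\<close> by blast
qed

lemma convex_combination_sum_sq_dist:
  fixes p :: "'k \<Rightarrow> real" and w :: "'k \<Rightarrow> 't \<Rightarrow> real"
  assumes "sum p K = 1" and v: "\<forall>t\<in>I. v t = (\<Sum>\<kappa>\<in>K. p \<kappa> * w \<kappa> t)"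
  shows "(\<Sum>\<kappa>\<in>K. p \<kappa> * (\<Sum>t\<in>I. (e t + v t - w \<kappa> t)\<^sup>2))
    = (\<Sum>t\<in>I. (e t)\<^sup>2) + (\<Sum>\<kappa>\<in>K. p \<kappa> * (\<Sum>t\<in>I. (w \<kappa> t)\<^sup>2)) - (\<Sum>t\<in>I. (v t)\<^sup>2)"
proof -
  have pointwise: "(\<Sum>\<kappa>\<in>K. p \<kappa> * (e t + v t - w \<kappa> t)\<^sup>2)
      = (e t)\<^sup>2 + (\<Sum>\<kappa>\<in>K. p \<kappa> * (w \<kappa> t)\<^sup>2) - (v t)\<^sup>2" if "t \<in> I" for t
  proof -
    have "(\<Sum>\<kappa>\<in>K. p \<kappa> * (e t + v t - w \<kappa> t)\<^sup>2)
        = (\<Sum>\<kappa>\<in>K. p \<kappa> * (e t + v t)\<^sup>2 - 2 * (e t + v t) * (p \<kappa> * w \<kappa> t) + p \<kappa> * (w \<kappa> t)\<^sup>2)"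
      by (intro sum.cong) (simp_all add: power2_eq_square algebra_simps)
    also have "\<dots> = (e t + v t)\<^sup>2 - 2 * (e t + v t) * v t + (\<Sum>\<kappa>\<in>K. p \<kappa> * (w \<kappa> t)\<^sup>2)"
      using assms(1) v that
      by (simp add: sum.distrib sum_subtractf sum_distrib_left flip: sum_distrib_right)
    finally show ?thesis
      by (simp add: power2_eq_square algebra_simps)
  qed
  have "(\<Sum>\<kappa>\<in>K. p \<kappa> * (\<Sum>t\<in>I. (e t + v t - w \<kappa> t)\<^sup>2))
      = (\<Sum>t\<in>I. \<Sum>\<kappa>\<in>K. p \<kappa> * (e t + v t - w \<kappa> t)\<^sup>2)"
    by (simp add: sum_distrib_left sum.swap[of _ I])
  also have "\<dots> = (\<Sum>t\<in>I. (e t)\<^sup>2 + (\<Sum>\<kappa>\<in>K. p \<kappa> * (w \<kappa> t)\<^sup>2) - (v t)\<^sup>2)"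
    by (rule sum.cong) (simp_all add: pointwise)
  also have "\<dots> = (\<Sum>t\<in>I. (e t)\<^sup>2) + (\<Sum>\<kappa>\<in>K. p \<kappa> * (\<Sum>t\<in>I. (w \<kappa> t)\<^sup>2)) - (\<Sum>t\<in>I. (v t)\<^sup>2)"
    by (simp add: sum.distrib sum_subtractf sum_distrib_left sum.swap[of _ I])
  finally show ?thesis .
qed

lemma sum_sq_convex_combination_le:
  fixes p :: "'k \<Rightarrow> real" and w :: "'k \<Rightarrow> 't \<Rightarrow> real"
  assumes p: "\<forall>\<kappa>\<in>K. 0 \<le> p \<kappa>" "sum p K = 1"
    and v: "\<forall>t\<in>I. v t = (\<Sum>\<kappa>\<in>K. p \<kappa> * w \<kappa> t)"
    and R: "\<forall>\<kappa>\<in>K. (\<Sum>t\<in>I. (w \<kappa> t)\<^sup>2) \<le> R"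
  shows "(\<Sum>t\<in>I. (v t)\<^sup>2) \<le> R"
proof -
  have "0 \<le> (\<Sum>\<kappa>\<in>K. p \<kappa> * (\<Sum>t\<in>I. (0 + v t - w \<kappa> t)\<^sup>2))"
    using p(1) by (intro sum_nonneg mult_nonneg_nonneg) (auto intro: sum_nonneg)
  also have "\<dots> = (\<Sum>\<kappa>\<in>K. p \<kappa> * (\<Sum>t\<in>I. (w \<kappa> t)\<^sup>2)) - (\<Sum>t\<in>I. (v t)\<^sup>2)"
    using convex_combination_sum_sq_dist[OF p(2) v, of "\<lambda>_. 0"] by simp
  finally show ?thesis
    using convex_combination_le[OF p R] by linarith
qed

text \<open>Maurey's empirical method, derandomised: each new sample point is chosen to do no worse
  than the \<open>p\<close>-average over all candidates, which is what a random choice achieves.\<close>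

lemma maurey_sparsification:
  fixes p :: "'k \<Rightarrow> real" and w :: "'k \<Rightarrow> 't \<Rightarrow> real"
  assumes p: "\<forall>\<kappa>\<in>K. 0 \<le> p \<kappa>" "sum p K = 1"
    and v: "\<forall>t\<in>I. v t = (\<Sum>\<kappa>\<in>K. p \<kappa> * w \<kappa> t)"
    and R: "\<forall>\<kappa>\<in>K. (\<Sum>t\<in>I. (w \<kappa> t)\<^sup>2) \<le> R"
  shows "\<exists>gs. set gs \<subseteq> K \<and> length gs = m \<and>
    (\<Sum>t\<in>I. (real m * v t - (\<Sum>\<kappa>\<leftarrow>gs. w \<kappa> t))\<^sup>2) \<le> real m * R"
proof (induction m)
  case 0
  show ?case by simp
next
  case (Suc m)
  then obtain gs where gs: "set gs \<subseteq> K" "length gs = m"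
    "(\<Sum>t\<in>I. (real m * v t - (\<Sum>\<kappa>\<leftarrow>gs. w \<kappa> t))\<^sup>2) \<le> real m * R"
    by blast
  define e where "e t = real m * v t - (\<Sum>\<kappa>\<leftarrow>gs. w \<kappa> t)" for t
  have "(\<Sum>\<kappa>\<in>K. p \<kappa> * (\<Sum>t\<in>I. (e t + v t - w \<kappa> t)\<^sup>2))
      = (\<Sum>t\<in>I. (e t)\<^sup>2) + (\<Sum>\<kappa>\<in>K. p \<kappa> * (\<Sum>t\<in>I. (w \<kappa> t)\<^sup>2)) - (\<Sum>t\<in>I. (v t)\<^sup>2)"
    by (rule convex_combination_sum_sq_dist[OF p(2) v])
  also have "\<dots> \<le> real m * R + R"
    using gs(3) convex_combination_le[OF p R] sum_nonneg[of I "\<lambda>t. (v t)\<^sup>2"]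
    unfolding e_def by force
  finally obtain \<kappa> where "\<kappa> \<in> K" and \<kappa>: "(\<Sum>t\<in>I. (e t + v t - w \<kappa> t)\<^sup>2) \<le> real m * R + R"
    using ex_le_convex_combination[OF p, of "\<lambda>\<kappa>. \<Sum>t\<in>I. (e t + v t - w \<kappa> t)\<^sup>2"] by force
  have "real (Suc m) * v t - (\<Sum>\<kappa>'\<leftarrow>\<kappa> # gs. w \<kappa>' t) = e t + v t - w \<kappa> t" for t
    by (simp add: e_def algebra_simps)
  then show ?case
    using gs \<open>\<kappa> \<in> K\<close> \<kappa> by (intro exI[of _ "\<kappa> # gs"]) (simp add: algebra_simps)
qed

section \<open>Atomic decomposition of the feature map\<close>

lemma sum_times_bool:
  "(\<Sum>\<iota>\<in>S \<times> T \<times> (UNIV :: bool set). h \<iota>) = (\<Sum>a\<in>S. \<Sum>b\<in>T. h (a, b, True) + h (a, b, False))"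
proof -
  have "(\<Sum>\<iota>\<in>S \<times> T \<times> (UNIV :: bool set). h \<iota>) = (\<Sum>a\<in>S. \<Sum>b\<in>T. \<Sum>c\<in>UNIV. h (a, b, c))"
    by (simp add: sum.cartesian_product)
  then show ?thesis
    by (simp add: UNIV_bool add.commute)
qed

lemma tmatvec_delta:
  assumes "i0 < d"
  shows "tmatvec d (\<lambda>i j. if i = i0 \<and> j = j0 then c else 0) y = (\<lambda>j. if j = j0 then c * y i0 else 0)"
  using assms by (auto simp: tmatvec_def if_distrib[of "\<lambda>a. a * y _"] sum.delta cong: if_cong)

lemma tmatvec_sum_list:
  "tmatvec d (\<lambda>i j. \<Sum>\<kappa>\<leftarrow>gs. D \<kappa> i j) y j = (\<Sum>\<kappa>\<leftarrow>gs. tmatvec d (D \<kappa>) y j)"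
  by (induction gs) (simp_all add: tmatvec_def sum.distrib distrib_right)

lemma tmatvec_divide: "tmatvec d (\<lambda>i j. A i j / c) y j = tmatvec d A y j / c"
  by (simp add: tmatvec_def sum_divide_distrib)

locale atomic_decomposition =
  fixes P :: "'p set" and z :: "'p \<Rightarrow> nat \<Rightarrow> real" and d k :: nat and s :: real
  assumes finite_P: "finite P" and s_pos: "0 < s"
begin

definition row_mass :: "nat \<Rightarrow> real" where
  "row_mass i = sqrt (\<Sum>p\<in>P. (z p i)\<^sup>2)"

definition atom_index :: "(nat \<times> nat \<times> bool) option set" where
  "atom_index = insert None (Some ` ({..<d} \<times> {..<k} \<times> UNIV))"

text \<open>The scaling by \<open>1 / row_mass i\<close> gives every atom feature energy \<open>s\<^sup>2\<close>; when the row mass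
  vanishes, division by zero makes the atom the zero matrix.\<close>

definition atom :: "(nat \<times> nat \<times> bool) option \<Rightarrow> nat \<Rightarrow> nat \<Rightarrow> real" where
  "atom \<kappa> = (case \<kappa> of
      None \<Rightarrow> (\<lambda>_ _. 0)
    | Some (i0, j0, \<sigma>) \<Rightarrow> (\<lambda>i j. if i = i0 \<and> j = j0 then (if \<sigma> then s else - s) / row_mass i0 else 0))"

definition entry_weight :: "(nat \<Rightarrow> nat \<Rightarrow> real) \<Rightarrow> nat \<times> nat \<times> bool \<Rightarrow> real" where
  "entry_weight A = (\<lambda>(i, j, \<sigma>). max (if \<sigma> then A i j else - A i j) 0 * row_mass i / s)"

definition atom_weight :: "(nat \<Rightarrow> nat \<Rightarrow> real) \<Rightarrow> (nat \<times> nat \<times> bool) option \<Rightarrow> real" where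
  "atom_weight A \<kappa> = (case \<kappa> of
      None \<Rightarrow> 1 - sum (entry_weight A) ({..<d} \<times> {..<k} \<times> UNIV)
    | Some \<iota> \<Rightarrow> entry_weight A \<iota>)"

definition atom_mean :: "(nat \<times> nat \<times> bool) option list \<Rightarrow> nat \<Rightarrow> nat \<Rightarrow> real" where
  "atom_mean gs = (\<lambda>i j. (\<Sum>\<kappa>\<leftarrow>gs. atom \<kappa> i j) / length gs)"

lemma finite_atom_index: "finite atom_index"
  by (simp add: atom_index_def)

lemma card_atom_index: "card atom_index = 2 * d * k + 1"
proof -
  have "card (Some ` ({..<d} \<times> {..<k} \<times> (UNIV :: bool set))) = d * k * 2"
    by (simp add: card_image card_cartesian_product UNIV_bool)
  then show ?thesis
    by (simp add: atom_index_def)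
qed

lemma sum_atom_index:
  "(\<Sum>\<kappa>\<in>atom_index. h \<kappa>) = h None + (\<Sum>\<iota>\<in>{..<d} \<times> {..<k} \<times> UNIV. h (Some \<iota>))"
  by (simp add: atom_index_def sum.reindex)

lemma row_mass_nonneg: "0 \<le> row_mass i"
  by (simp add: row_mass_def sum_nonneg)

lemma sum_row_mass_power2: "(\<Sum>i<d. (row_mass i)\<^sup>2) = (\<Sum>p\<in>P. (vnorm d (z p))\<^sup>2)"
  by (simp add: row_mass_def vnorm_power2 sum_nonneg sum.swap[of _ P])

lemma z_eq_0_if_row_mass_eq_0:
  assumes "row_mass i = 0" "p \<in> P"
  shows "z p i = 0"
  using assms finite_P by (simp add: row_mass_def sum_nonneg_eq_0_iff)

lemma tmatvec_atom_None: "tmatvec d (atom None) y j = 0"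
  by (simp add: atom_def tmatvec_def)

lemma tmatvec_atom_Some:
  assumes "i0 < d"
  shows "tmatvec d (atom (Some (i0, j0, \<sigma>))) y j
    = (if j = j0 then (if \<sigma> then s else - s) / row_mass i0 * y i0 else 0)"
  using tmatvec_delta[OF assms, of j0 "(if \<sigma> then s else - s) / row_mass i0" y]
  by (simp add: atom_def)

lemma tmatvec_atom_mean:
  "tmatvec d (atom_mean gs) y j = (\<Sum>\<kappa>\<leftarrow>gs. tmatvec d (atom \<kappa>) y j) / length gs"
  unfolding atom_mean_def tmatvec_divide[of d "\<lambda>i j. \<Sum>\<kappa>\<leftarrow>gs. atom \<kappa> i j"] tmatvec_sum_list ..


lemma sum_entry_weight_le:
  assumes "norm21 d k A * sqrt (\<Sum>p\<in>P. (vnorm d (z p))\<^sup>2) \<le> s"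
  shows "sum (entry_weight A) ({..<d} \<times> {..<k} \<times> UNIV) \<le> 1"
proof -
  have "entry_weight A (i, j, True) + entry_weight A (i, j, False) = \<bar>A i j\<bar> * \<bar>row_mass i\<bar> / s" for i j
    using row_mass_nonneg[of i] by (auto simp: entry_weight_def max_def field_simps)
  then have "sum (entry_weight A) ({..<d} \<times> {..<k} \<times> UNIV) = (\<Sum>j<k. \<Sum>i<d. \<bar>A i j\<bar> * \<bar>row_mass i\<bar>) / s"
    unfolding sum_times_bool by (simp add: sum_divide_distrib sum.swap[of _ "{..<d}"])
  also have "\<dots> \<le> (\<Sum>j<k. vnorm d (\<lambda>i. A i j) * vnorm d row_mass) / s"
    unfolding vnorm_eq_L2_set using s_pos
    by (intro divide_right_mono sum_mono L2_set_mult_ineq) simp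
  also have "\<dots> = norm21 d k A * sqrt (\<Sum>p\<in>P. (vnorm d (z p))\<^sup>2) / s"
    by (simp add: norm21_def vnorm_def sum_row_mass_power2 flip: sum_distrib_right)
  also have "\<dots> \<le> 1"
    using assms s_pos by simp
  finally show ?thesis .
qed

lemma atom_weight_nonneg:
  assumes "norm21 d k A * sqrt (\<Sum>p\<in>P. (vnorm d (z p))\<^sup>2) \<le> s"
  shows "\<forall>\<kappa>\<in>atom_index. 0 \<le> atom_weight A \<kappa>"
  using sum_entry_weight_le[OF assms] s_pos row_mass_nonneg
  by (auto simp: atom_index_def atom_weight_def entry_weight_def)

lemma sum_atom_weight: "sum (atom_weight A) atom_index = 1"
  by (simp add: sum_atom_index atom_weight_def)

lemma entry_weight_pair:
  assumes "i < d" "p \<in> P"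
  shows "entry_weight A (i, j0, True) * tmatvec d (atom (Some (i, j0, True))) (z p) j
    + entry_weight A (i, j0, False) * tmatvec d (atom (Some (i, j0, False))) (z p) j
    = (if j = j0 then A i j0 * z p i else 0)"
proof (cases "row_mass i = 0")
  case True
  then show ?thesis
    using z_eq_0_if_row_mass_eq_0[OF _ assms(2)] by (simp add: tmatvec_atom_Some[OF assms(1)])
next
  case False
  then show ?thesis
    using s_pos by (auto simp: tmatvec_atom_Some[OF assms(1)] entry_weight_def max_def field_simps)
qed

lemma tmatvec_eq_atom_combination:
  assumes "p \<in> P" "j < k"
  shows "tmatvec d A (z p) j = (\<Sum>\<kappa>\<in>atom_index. atom_weight A \<kappa> * tmatvec d (atom \<kappa>) (z p) j)"
proof -
  have "(\<Sum>\<kappa>\<in>atom_index. atom_weight A \<kappa> * tmatvec d (atom \<kappa>) (z p) j)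
      = (\<Sum>i<d. \<Sum>j0<k. if j = j0 then A i j0 * z p i else 0)"
    unfolding sum_atom_index sum_times_bool
    by (simp add: tmatvec_atom_None atom_weight_def entry_weight_pair[OF _ assms(1)])
  also have "\<dots> = tmatvec d A (z p) j"
    using assms(2) by (simp add: tmatvec_def)
  finally show ?thesis ..
qed

lemma atom_energy_le:
  assumes "\<kappa> \<in> atom_index"
  shows "(\<Sum>p\<in>P. \<Sum>j<k. (tmatvec d (atom \<kappa>) (z p) j)\<^sup>2) \<le> s\<^sup>2"
proof (cases \<kappa>)
  case None
  then show ?thesis
    by (simp add: tmatvec_atom_None)
next
  case (Some \<iota>)
  with assms obtain i0 j0 \<sigma> where \<kappa>: "\<kappa> = Some (i0, j0, \<sigma>)" and "i0 < d" "j0 < k"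
    by (auto simp: atom_index_def)
  have "(\<Sum>p\<in>P. \<Sum>j<k. (tmatvec d (atom \<kappa>) (z p) j)\<^sup>2)
      = (\<Sum>p\<in>P. ((if \<sigma> then s else - s) / row_mass i0 * z p i0)\<^sup>2)"
    using \<open>i0 < d\<close> \<open>j0 < k\<close>
    by (simp add: \<kappa> tmatvec_atom_Some if_distrib[of "\<lambda>a. a\<^sup>2"] cong: if_cong)
  also have "\<dots> = (s / row_mass i0)\<^sup>2 * (\<Sum>p\<in>P. (z p i0)\<^sup>2)"
    unfolding power_mult_distrib sum_distrib_left by (cases \<sigma>) simp_all
  also have "\<dots> = (s / row_mass i0)\<^sup>2 * (row_mass i0)\<^sup>2"
    by (simp add: row_mass_def sum_nonneg)
  also have "\<dots> \<le> s\<^sup>2"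
    by (simp add: power_divide)
  finally show ?thesis .
qed


lemma sum_features: "(\<Sum>t\<in>P \<times> {..<k}. h t) = (\<Sum>p\<in>P. \<Sum>j<k. h (p, j))"
  by (simp add: sum.cartesian_product)

lemma features_atom_combination:
  assumes "norm21 d k A * sqrt (\<Sum>p\<in>P. (vnorm d (z p))\<^sup>2) \<le> s"
  defines "v \<equiv> \<lambda>(p, j). tmatvec d A (z p) j" and "w \<equiv> \<lambda>\<kappa> (p, j). tmatvec d (atom \<kappa>) (z p) j"
  shows "\<forall>\<kappa>\<in>atom_index. 0 \<le> atom_weight A \<kappa>" "sum (atom_weight A) atom_index = 1"
    "\<forall>t\<in>P \<times> {..<k}. v t = (\<Sum>\<kappa>\<in>atom_index. atom_weight A \<kappa> * w \<kappa> t)"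
    "\<forall>\<kappa>\<in>atom_index. (\<Sum>t\<in>P \<times> {..<k}. (w \<kappa> t)\<^sup>2) \<le> s\<^sup>2"
  using atom_weight_nonneg[OF assms(1)] sum_atom_weight atom_energy_le
  by (auto simp: v_def w_def sum_features intro: tmatvec_eq_atom_combination)

lemma feature_energy_le:
  assumes "norm21 d k A * sqrt (\<Sum>p\<in>P. (vnorm d (z p))\<^sup>2) \<le> s"
  shows "(\<Sum>p\<in>P. \<Sum>j<k. (tmatvec d A (z p) j)\<^sup>2) \<le> s\<^sup>2"
  using sum_sq_convex_combination_le[OF features_atom_combination[OF assms]]
  by (simp add: sum_features)

lemma sparse_approximation:
  assumes "norm21 d k A * sqrt (\<Sum>p\<in>P. (vnorm d (z p))\<^sup>2) \<le> s" and "m > 0"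
  obtains gs where "set gs \<subseteq> atom_index" "length gs = m"
    "(\<Sum>p\<in>P. \<Sum>j<k. (tmatvec d A (z p) j - tmatvec d (atom_mean gs) (z p) j)\<^sup>2) \<le> s\<^sup>2 / m"
proof -
  obtain gs where gs: "set gs \<subseteq> atom_index" "length gs = m"
    "(\<Sum>p\<in>P. \<Sum>j<k. (real m * tmatvec d A (z p) j - (\<Sum>\<kappa>\<leftarrow>gs. tmatvec d (atom \<kappa>) (z p) j))\<^sup>2)
      \<le> real m * s\<^sup>2"
    using maurey_sparsification[OF features_atom_combination[OF assms(1)], of m]
    by (auto simp: sum_features)
  have "tmatvec d A (z p) j - tmatvec d (atom_mean gs) (z p) j
      = (real m * tmatvec d A (z p) j - (\<Sum>\<kappa>\<leftarrow>gs. tmatvec d (atom \<kappa>) (z p) j)) / m" for p j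
    using \<open>m > 0\<close> gs(2) by (simp add: tmatvec_atom_mean field_simps)
  then have "(\<Sum>p\<in>P. \<Sum>j<k. (tmatvec d A (z p) j - tmatvec d (atom_mean gs) (z p) j)\<^sup>2)
      = (\<Sum>p\<in>P. \<Sum>j<k. (real m * tmatvec d A (z p) j - (\<Sum>\<kappa>\<leftarrow>gs. tmatvec d (atom \<kappa>) (z p) j))\<^sup>2) / m\<^sup>2"
    by (simp add: power_divide sum_divide_distrib)
  also have "\<dots> \<le> real m * s\<^sup>2 / m\<^sup>2"
    using gs(3) by (rule divide_right_mono) simp
  also have "\<dots> = s\<^sup>2 / m"
    by (simp add: power2_eq_square)
  finally show ?thesis
    using gs(1,2) that by blast
qed

end

text \<open>Centres of an external \<open>\<epsilon>/2\<close>-net are moved to nearby points of the set.\<close>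

lemma covering_number_le_card:
  assumes "finite C" and near: "\<forall>u\<in>S. \<exists>c\<in>C. vnorm n (\<lambda>i. u i - c i) \<le> \<epsilon> / 2"
  shows "covering_number n S \<epsilon> \<le> card C"
proof -
  define C' where "C' = {c\<in>C. \<exists>u\<in>S. vnorm n (\<lambda>i. u i - c i) \<le> \<epsilon> / 2}"
  define pick where "pick c = (SOME u. u \<in> S \<and> vnorm n (\<lambda>i. u i - c i) \<le> \<epsilon> / 2)" for c
  have pick: "pick c \<in> S" "vnorm n (\<lambda>i. pick c i - c i) \<le> \<epsilon> / 2" if "c \<in> C'" for c
    using someI_ex[of "\<lambda>u. u \<in> S \<and> vnorm n (\<lambda>i. u i - c i) \<le> \<epsilon> / 2"] that
    by (auto simp: C'_def pick_def)
  have cover: "\<exists>w\<in>pick ` C'. vnorm n (\<lambda>i. u i - w i) \<le> \<epsilon>" if "u \<in> S" for u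
  proof -
    obtain c where "c \<in> C" and c: "vnorm n (\<lambda>i. u i - c i) \<le> \<epsilon> / 2"
      using near \<open>u \<in> S\<close> by blast
    then have "c \<in> C'"
      using \<open>u \<in> S\<close> by (auto simp: C'_def)
    have "vnorm n (\<lambda>i. u i - pick c i) \<le> vnorm n (\<lambda>i. u i - c i) + vnorm n (\<lambda>i. pick c i - c i)"
      using vnorm_diff_triangle[of n u "pick c" c] by (simp add: vnorm_diff_commute[of n c])
    also have "\<dots> \<le> \<epsilon>"
      using c pick(2)[OF \<open>c \<in> C'\<close>] by simp
    finally show ?thesis
      using \<open>c \<in> C'\<close> by blast
  qed
  have "finite (pick ` C')" "pick ` C' \<subseteq> S"
    using assms(1) pick(1) by (auto simp: C'_def)
  then have "covering_number n S \<epsilon> \<le> card (pick ` C')"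
    unfolding covering_number_def using cover by (intro cInf_lower) auto
  also have "\<dots> \<le> card C"
    using assms(1) by (intro card_image_le[THEN order_trans] card_mono) (auto simp: C'_def)
  finally show ?thesis .
qed

lemma ln_le_mult_ln_if_le_power:
  assumes "real N \<le> c ^ m" "1 \<le> c"
  shows "ln (real N) \<le> m * ln c"
proof (cases "N = 0")
  case False
  then have "ln (real N) \<le> ln (c ^ m)"
    using assms by (subst ln_le_cancel_iff) auto
  then show ?thesis
    using assms(2) by (simp add: ln_realpow)
qed (use assms(2) in simp)

lemma ln_add_one_le_two_ln:
  fixes x :: real
  assumes "2 \<le> x"
  shows "ln (x + 1) \<le> 2 * ln x"
proof -
  have "2 * x \<le> x * x"
    using assms by (intro mult_right_mono) auto
  then have "x + 1 \<le> x\<^sup>2"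
    using assms unfolding power2_eq_square by linarith
  then have "ln (x + 1) \<le> ln (x\<^sup>2)"
    using assms by (subst ln_le_cancel_iff) auto
  then show ?thesis
    using assms by (simp add: ln_realpow)
qed

definition stack :: "(nat \<Rightarrow> nat \<Rightarrow> real) \<Rightarrow> (nat \<Rightarrow> nat \<Rightarrow> real) \<Rightarrow> nat \<times> bool \<Rightarrow> nat \<Rightarrow> real" where
  "stack x x' = (\<lambda>(l, \<beta>). if \<beta> then x l else x' l)"

lemma sum_stacked: "(\<Sum>p\<in>{..<n} \<times> UNIV. h p) = (\<Sum>l<n. h (l, True) + h (l, False))"
proof -
  have "(\<Sum>p\<in>{..<n} \<times> UNIV. h p) = (\<Sum>l<n. \<Sum>\<beta>\<in>UNIV. h (l, \<beta>))"
    by (simp add: sum.cartesian_product)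
  then show ?thesis
    by (simp add: UNIV_bool add.commute)
qed

section \<open>The covering bound\<close>

locale covering_setting =
  fixes n d k :: nat and \<phi> :: "real \<Rightarrow> real" and L b a a' :: real and x x' :: "nat \<Rightarrow> nat \<Rightarrow> real"
  assumes n_pos: "1 \<le> n" and k_pos: "1 \<le> k" and lipschitz: "L-lipschitz_on UNIV \<phi>"
    and b_pos: "0 < b" and a_pos: "0 < a"
    and data_bounded: "\<forall>i<n. vnorm d (x i) \<le> b \<and> vnorm d (x' i) \<le> b"

sublocale covering_setting \<subseteq>
  atomic_decomposition "{..<n} \<times> UNIV" "stack x x'" d k "sqrt (2 * n) * a * b"
  using n_pos a_pos b_pos by unfold_locales simp_all

context covering_setting
begin

definition F_vec :: "(nat \<Rightarrow> nat \<Rightarrow> real) \<Rightarrow> nat \<Rightarrow> real" where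
  "F_vec A = (\<lambda>i. if i < n then zeta k (\<phi> \<circ> tmatvec d A (x i)) (\<phi> \<circ> tmatvec d A (x' i)) else 0)"

text \<open>The sparse approximants of \<open>A\<close> need not obey the operator norm bound, so their
  \<open>\<zeta>\<close>-values are clipped at the largest value attained on \<open>J_set d k a a'\<close>.\<close>

definition clipped_F_vec :: "(nat \<Rightarrow> nat \<Rightarrow> real) \<Rightarrow> nat \<Rightarrow> real" where
  "clipped_F_vec B = (\<lambda>i. if i < n
     then min ((L * (2 * a' * b))\<^sup>2 / k) (zeta k (\<phi> \<circ> tmatvec d B (x i)) (\<phi> \<circ> tmatvec d B (x' i)))
     else 0)"

definition feature_dist :: "(nat \<Rightarrow> nat \<Rightarrow> real) \<Rightarrow> (nat \<Rightarrow> nat \<Rightarrow> real) \<Rightarrow> real" where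
  "feature_dist A B =
     (\<Sum>p\<in>{..<n} \<times> UNIV. \<Sum>j<k. (tmatvec d A (stack x x' p) j - tmatvec d B (stack x x' p) j)\<^sup>2)"

definition complexity :: "real \<Rightarrow> real" where
  "complexity \<epsilon> = a\<^sup>2 * a'\<^sup>2 * b ^ 4 * real n * L ^ 4 / ((real k)\<^sup>2 * \<epsilon>\<^sup>2)"

lemma F_set_eq_image: "F_set n d k \<phi> x x' G = F_vec ` G"
  by (simp add: F_set_def F_vec_def)

lemma norm21_data_le:
  assumes "norm21 d k A \<le> a"
  shows "norm21 d k A * sqrt (\<Sum>p\<in>{..<n} \<times> UNIV. (vnorm d (stack x x' p))\<^sup>2) \<le> sqrt (2 * n) * a * b"
proof -
  have "(\<Sum>p\<in>{..<n} \<times> UNIV. (vnorm d (stack x x' p))\<^sup>2) \<le> (\<Sum>l<n. b\<^sup>2 + b\<^sup>2)"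
    unfolding sum_stacked stack_def
    using data_bounded by (intro sum_mono add_mono power_mono) auto
  then have "sqrt (\<Sum>p\<in>{..<n} \<times> UNIV. (vnorm d (stack x x' p))\<^sup>2) \<le> sqrt ((sqrt (2 * n) * b)\<^sup>2)"
    by (intro real_sqrt_le_mono) (simp add: power_mult_distrib)
  then have "sqrt (\<Sum>p\<in>{..<n} \<times> UNIV. (vnorm d (stack x x' p))\<^sup>2) \<le> sqrt (2 * n) * b"
    using b_pos by simp
  moreover have "0 \<le> norm21 d k A"
    by (simp add: norm21_def sum_nonneg)
  ultimately have "norm21 d k A * sqrt (\<Sum>p\<in>{..<n} \<times> UNIV. (vnorm d (stack x x' p))\<^sup>2) \<le> a * (sqrt (2 * n) * b)"
    using assms by (intro mult_mono) (auto intro: sum_nonneg)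
  then show ?thesis
    by (simp add: mult_ac)
qed

lemma vnorm_feature_diff_le:
  assumes "opnorm d k A \<le> a'" "l < n"
  shows "vnorm k (\<lambda>j. tmatvec d A (x l) j - tmatvec d A (x' l) j) \<le> 2 * a' * b"
proof -
  have "vnorm k (\<lambda>j. tmatvec d A (x l) j - tmatvec d A (x' l) j) = vnorm k (tmatvec d A (\<lambda>i. x l i - x' l i))"
    by (simp add: tmatvec_def sum_subtractf right_diff_distrib)
  also have "\<dots> \<le> opnorm d k A * vnorm d (\<lambda>i. x l i - x' l i)"
    by (rule tmatvec_vnorm_le)
  also have "\<dots> \<le> a' * vnorm d (\<lambda>i. x l i - x' l i)"
    using assms(1) by (rule mult_right_mono) simp
  also have "\<dots> \<le> a' * (2 * b)"
    using vnorm_diff_le[of d "x l" "x' l"] data_bounded assms opnorm_nonneg[of d k A]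
    by (intro mult_left_mono) auto
  finally show ?thesis
    by simp
qed

lemma F_vec_clipped_coord_le:
  assumes "opnorm d k A \<le> a'" "l < n"
  shows "\<bar>F_vec A l - clipped_F_vec B l\<bar> \<le> 3 * (L * (2 * a' * b)) *
    (L * (vnorm k (\<lambda>j. tmatvec d A (x l) j - tmatvec d B (x l) j)
      + vnorm k (\<lambda>j. tmatvec d A (x' l) j - tmatvec d B (x' l) j))) / k"
  using zeta_comp_clipped_close[OF lipschitz _ vnorm_feature_diff_le[OF assms]] k_pos assms(2)
  by (simp add: F_vec_def clipped_F_vec_def)

lemma F_vec_clipped_dist_le:
  assumes "opnorm d k A \<le> a'"
  shows "(vnorm n (\<lambda>i. F_vec A i - clipped_F_vec B i))\<^sup>2
    \<le> 18 * (L * (2 * a' * b))\<^sup>2 * L\<^sup>2 * feature_dist A B / (real k)\<^sup>2"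
proof -
  define W where "W = L * (2 * a' * b)"
  define \<alpha> where "\<alpha> l = vnorm k (\<lambda>j. tmatvec d A (x l) j - tmatvec d B (x l) j)" for l
  define \<alpha>' where "\<alpha>' l = vnorm k (\<lambda>j. tmatvec d A (x' l) j - tmatvec d B (x' l) j)" for l
  have coord: "\<bar>F_vec A l - clipped_F_vec B l\<bar> \<le> 3 * W * (L * (\<alpha> l + \<alpha>' l)) / k" if "l < n" for l
    unfolding W_def \<alpha>_def \<alpha>'_def using assms that by (rule F_vec_clipped_coord_le)
  have "(vnorm n (\<lambda>i. F_vec A i - clipped_F_vec B i))\<^sup>2 \<le> (\<Sum>l<n. (3 * W * (L * (\<alpha> l + \<alpha>' l)) / k)\<^sup>2)"
    unfolding vnorm_power2
  proof (rule sum_mono)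
    fix l
    assume "l \<in> {..<n}"
    then have "\<bar>F_vec A l - clipped_F_vec B l\<bar> \<le> 3 * W * (L * (\<alpha> l + \<alpha>' l)) / k"
      by (simp add: coord)
    then show "(F_vec A l - clipped_F_vec B l)\<^sup>2 \<le> (3 * W * (L * (\<alpha> l + \<alpha>' l)) / k)\<^sup>2"
      by (metis abs_ge_zero power2_abs power_mono)
  qed
  also have "\<dots> \<le> (\<Sum>l<n. 18 * W\<^sup>2 * L\<^sup>2 * ((\<alpha> l)\<^sup>2 + (\<alpha>' l)\<^sup>2) / (real k)\<^sup>2)"
  proof (rule sum_mono)
    fix l
    have "(\<alpha> l + \<alpha>' l)\<^sup>2 \<le> 2 * ((\<alpha> l)\<^sup>2 + (\<alpha>' l)\<^sup>2)"
      using zero_le_power2[of "\<alpha> l - \<alpha>' l"] by (simp add: power2_eq_square algebra_simps)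
    have "(3 * W * (L * (\<alpha> l + \<alpha>' l)) / k)\<^sup>2 = 9 * (W\<^sup>2 * L\<^sup>2) * (\<alpha> l + \<alpha>' l)\<^sup>2 / (real k)\<^sup>2"
      by (simp add: power_divide power_mult_distrib)
    also have "\<dots> \<le> 9 * (W\<^sup>2 * L\<^sup>2) * (2 * ((\<alpha> l)\<^sup>2 + (\<alpha>' l)\<^sup>2)) / (real k)\<^sup>2"
      using \<open>(\<alpha> l + \<alpha>' l)\<^sup>2 \<le> 2 * ((\<alpha> l)\<^sup>2 + (\<alpha>' l)\<^sup>2)\<close>
      by (intro divide_right_mono mult_left_mono) simp_all
    also have "\<dots> = 18 * W\<^sup>2 * L\<^sup>2 * ((\<alpha> l)\<^sup>2 + (\<alpha>' l)\<^sup>2) / (real k)\<^sup>2"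
      by (simp add: mult_ac)
    finally show "(3 * W * (L * (\<alpha> l + \<alpha>' l)) / k)\<^sup>2 \<le> 18 * W\<^sup>2 * L\<^sup>2 * ((\<alpha> l)\<^sup>2 + (\<alpha>' l)\<^sup>2) / (real k)\<^sup>2" .
  qed
  also have "\<dots> = 18 * W\<^sup>2 * L\<^sup>2 * feature_dist A B / (real k)\<^sup>2"
    by (simp add: feature_dist_def sum_stacked stack_def \<alpha>_def \<alpha>'_def vnorm_power2
        sum_distrib_left sum_divide_distrib)
  finally show ?thesis
    unfolding W_def .
qed


lemma complexity_nonneg: "0 \<le> complexity \<epsilon>"
  by (simp add: complexity_def)

lemma F_vec_clipped_close:
  assumes "\<epsilon> > 0" "\<mu> > 0" "576 * complexity \<epsilon> \<le> \<mu>" "A \<in> J_set d k a a'"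
    and "feature_dist A B \<le> 2 * real n * a\<^sup>2 * b\<^sup>2 / \<mu>"
  shows "vnorm n (\<lambda>i. F_vec A i - clipped_F_vec B i) \<le> \<epsilon> / 2"
proof -
  have "(vnorm n (\<lambda>i. F_vec A i - clipped_F_vec B i))\<^sup>2
      \<le> 18 * (L * (2 * a' * b))\<^sup>2 * L\<^sup>2 * feature_dist A B / (real k)\<^sup>2"
    using assms(4) by (intro F_vec_clipped_dist_le) (simp add: J_set_def)
  also have "\<dots> \<le> 18 * (L * (2 * a' * b))\<^sup>2 * L\<^sup>2 * (2 * real n * a\<^sup>2 * b\<^sup>2 / \<mu>) / (real k)\<^sup>2"
    using assms(5) by (intro divide_right_mono mult_left_mono) simp_all
  also have "\<dots> = 144 * (a\<^sup>2 * a'\<^sup>2 * b ^ 4 * real n * L ^ 4) / ((real k)\<^sup>2 * \<mu>)"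
    by (simp add: power_mult_distrib power2_eq_square power4_eq_xxxx mult_ac)
  also have "\<dots> = 144 * complexity \<epsilon> * \<epsilon>\<^sup>2 / \<mu>"
    using assms(1) by (simp add: complexity_def field_simps)
  also have "\<dots> \<le> (\<epsilon> / 2)\<^sup>2"
  proof -
    have "144 * complexity \<epsilon> * \<epsilon>\<^sup>2 \<le> \<mu> / 4 * \<epsilon>\<^sup>2"
      using assms(3) by (intro mult_right_mono) simp_all
    then show ?thesis
      using assms(2) by (simp add: pos_divide_le_eq power_divide mult.commute)
  qed
  finally show ?thesis
    by (rule power2_le_imp_le) (use assms(1) in simp)
qed

lemma covering_number_le_card_of_approximants:
  assumes "\<epsilon> > 0" "finite \<B>" "\<mu> > 0" "576 * complexity \<epsilon> \<le> \<mu>"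
    and approx: "\<forall>A\<in>J_set d k a a'. \<exists>B\<in>\<B>. feature_dist A B \<le> 2 * real n * a\<^sup>2 * b\<^sup>2 / \<mu>"
  shows "covering_number n (F_set n d k \<phi> x x' (J_set d k a a')) \<epsilon> \<le> card \<B>"
proof -
  have "\<exists>c\<in>clipped_F_vec ` \<B>. vnorm n (\<lambda>i. u i - c i) \<le> \<epsilon> / 2"
    if u: "u \<in> F_set n d k \<phi> x x' (J_set d k a a')" for u
  proof -
    obtain A where "A \<in> J_set d k a a'" "u = F_vec A"
      using u by (auto simp: F_set_eq_image)
    moreover obtain B where "B \<in> \<B>" "feature_dist A B \<le> 2 * real n * a\<^sup>2 * b\<^sup>2 / \<mu>"
      using approx \<open>A \<in> J_set d k a a'\<close> by blast
    ultimately show ?thesis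
      using F_vec_clipped_close[OF assms(1,3,4)] by blast
  qed
  then have "covering_number n (F_set n d k \<phi> x x' (J_set d k a a')) \<epsilon> \<le> card (clipped_F_vec ` \<B>)"
    using assms(2) by (intro covering_number_le_card) simp_all
  also have "\<dots> \<le> card \<B>"
    using assms(2) by (rule card_image_le)
  finally show ?thesis .
qed

lemma covering_number_le_one:
  assumes "\<epsilon> > 0" "576 * complexity \<epsilon> \<le> 1"
  shows "covering_number n (F_set n d k \<phi> x x' (J_set d k a a')) \<epsilon> \<le> 1"
proof -
  have "feature_dist A (\<lambda>_ _. 0) \<le> 2 * real n * a\<^sup>2 * b\<^sup>2" if "A \<in> J_set d k a a'" for A
    using feature_energy_le[OF norm21_data_le] that
    by (simp add: feature_dist_def J_set_def tmatvec_def power_mult_distrib)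
  then show ?thesis
    using covering_number_le_card_of_approximants[OF assms(1), of "{\<lambda>_ _. 0}" 1] assms(2) by simp
qed

lemma covering_number_le_power:
  assumes "\<epsilon> > 0" "m > 0" "576 * complexity \<epsilon> \<le> m"
  shows "covering_number n (F_set n d k \<phi> x x' (J_set d k a a')) \<epsilon> \<le> (2 * d * k + 1) ^ m"
proof -
  define G where "G = {gs. set gs \<subseteq> atom_index \<and> length gs = m}"
  have "finite G"
    using finite_atom_index by (simp add: G_def finite_lists_length_eq)
  have "\<forall>A\<in>J_set d k a a'. \<exists>B\<in>atom_mean ` G. feature_dist A B \<le> 2 * real n * a\<^sup>2 * b\<^sup>2 / m"
  proof
    fix A
    assume "A \<in> J_set d k a a'"
    then have "norm21 d k A \<le> a"
      by (simp add: J_set_def)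
    then obtain gs where "gs \<in> G" "feature_dist A (atom_mean gs) \<le> (sqrt (2 * n) * a * b)\<^sup>2 / m"
      using sparse_approximation[OF norm21_data_le \<open>m > 0\<close>] by (auto simp: G_def feature_dist_def)
    then show "\<exists>B\<in>atom_mean ` G. feature_dist A B \<le> 2 * real n * a\<^sup>2 * b\<^sup>2 / m"
      by (auto simp: power_mult_distrib)
  qed
  then have "covering_number n (F_set n d k \<phi> x x' (J_set d k a a')) \<epsilon> \<le> card (atom_mean ` G)"
    using assms \<open>finite G\<close> by (intro covering_number_le_card_of_approximants) simp_all
  also have "\<dots> \<le> card G"
    using \<open>finite G\<close> by (rule card_image_le)
  also have "\<dots> = (2 * d * k + 1) ^ m"
    using finite_atom_index by (simp add: G_def card_lists_length_eq card_atom_index)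
  finally show ?thesis .
qed

lemma ln_covering_number_le:
  assumes "\<epsilon> > 0" "1 \<le> d"
  shows "ln (covering_number n (F_set n d k \<phi> x x' (J_set d k a a')) \<epsilon>)
    \<le> 2304 * complexity \<epsilon> * ln (2 * real d * real k)"
proof -
  let ?N = "covering_number n (F_set n d k \<phi> x x' (J_set d k a a')) \<epsilon>"
  have "2 \<le> 2 * real d * real k"
    using mult_mono[of 1 "real d" 1 "real k"] assms(2) k_pos by simp
  then have "0 \<le> ln (2 * real d * real k)"
    by simp
  show ?thesis
  proof (cases "576 * complexity \<epsilon> \<le> 1")
    case True
    then have "ln ?N \<le> 0"
      using ln_le_mult_ln_if_le_power[of ?N 1 0] covering_number_le_one[OF assms(1)] by simp
    also have "0 \<le> 2304 * complexity \<epsilon> * ln (2 * real d * real k)"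
      using complexity_nonneg \<open>0 \<le> ln (2 * real d * real k)\<close> by simp
    finally show ?thesis .
  next
    case False
    txt \<open>Rounding \<open>m\<close> up and \<open>ln (2 d k + 1) \<le> 2 ln (2 d k)\<close> each cost a factor 2 over 576.\<close>
    define m where "m = nat \<lceil>576 * complexity \<epsilon>\<rceil>"
    have "real m = \<lceil>576 * complexity \<epsilon>\<rceil>"
      using complexity_nonneg[of \<epsilon>] by (simp add: m_def)
    then have m: "576 * complexity \<epsilon> \<le> m" "m < 576 * complexity \<epsilon> + 1" "m > 0"
      using False ceiling_correct[of "576 * complexity \<epsilon>"] by linarith+
    have "real ?N \<le> real ((2 * d * k + 1) ^ m)"
      using covering_number_le_power[OF assms(1) m(3,1)] by (rule of_nat_mono)
    then have "ln ?N \<le> m * ln (2 * real d * real k + 1)"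
      by (intro ln_le_mult_ln_if_le_power) (simp_all add: add.commute)
    also have "\<dots> \<le> m * (2 * ln (2 * real d * real k))"
      using ln_add_one_le_two_ln[OF \<open>2 \<le> 2 * real d * real k\<close>] by (rule mult_left_mono) simp
    also have "\<dots> \<le> (1152 * complexity \<epsilon>) * (2 * ln (2 * real d * real k))"
      using m(2) False \<open>0 \<le> ln (2 * real d * real k)\<close> by (intro mult_right_mono) simp_all
    finally show ?thesis
      by simp
  qed
qed

end

theorem mainTheorem2:
  shows "\<exists>c>0. \<forall>(n::nat) (d::nat) (k::nat) (\<phi>::real \<Rightarrow> real) (L::real) (b::real)
            (x::nat \<Rightarrow> nat \<Rightarrow> real) (x'::nat \<Rightarrow> nat \<Rightarrow> real) (a::real) (a'::real) (\<epsilon>::real).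
     n \<ge> 1 \<longrightarrow> d \<ge> 1 \<longrightarrow> k \<ge> 1 \<longrightarrow>
     L-lipschitz_on UNIV \<phi> \<longrightarrow> \<phi> 0 = 0 \<longrightarrow> b > 0 \<longrightarrow>
     (\<forall>i<n. vnorm d (x i) \<le> b \<and> vnorm d (x' i) \<le> b) \<longrightarrow>
     a > 0 \<longrightarrow> a' > 0 \<longrightarrow> \<epsilon> > 0 \<longrightarrow>
     ln (real (covering_number n (F_set n d k \<phi> x x' (J_set d k a a')) \<epsilon>))
       \<le> c * (a\<^sup>2 * a'\<^sup>2 * b ^ 4 * real n * L ^ 4) / ((real k)\<^sup>2 * \<epsilon>\<^sup>2) * ln (2 * real d * real k)"
proof (intro exI[of _ "2304 :: real"] conjI allI impI)
  fix n d k :: nat and \<phi> :: "real \<Rightarrow> real" and L b a a' \<epsilon> :: real and x x' :: "nat \<Rightarrow> nat \<Rightarrow> real"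
  assume "n \<ge> 1" "d \<ge> 1" "k \<ge> 1" "L-lipschitz_on UNIV \<phi>" "\<phi> 0 = 0" "b > 0"
    "\<forall>i<n. vnorm d (x i) \<le> b \<and> vnorm d (x' i) \<le> b" "a > 0" "a' > 0" "\<epsilon> > 0"
  then interpret covering_setting n d k \<phi> L b a a' x x'
    by unfold_locales auto
  show "ln (real (covering_number n (F_set n d k \<phi> x x' (J_set d k a a')) \<epsilon>))
      \<le> 2304 * (a\<^sup>2 * a'\<^sup>2 * b ^ 4 * real n * L ^ 4) / ((real k)\<^sup>2 * \<epsilon>\<^sup>2) * ln (2 * real d * real k)"
    using ln_covering_number_le[OF \<open>\<epsilon> > 0\<close> \<open>d \<ge> 1\<close>] by (simp add: complexity_def)
qed simp

end
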